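(* Let $G$ be a graph on vertex set $[n]$. Suppose $v\in[n]$ has three distinct neighbours $R=\{r_1,r_2,r_3\}$ with $\deg(r_i)\geq 2$ for $i=1,2,3$, and assume that no triangle of $G$ contains $v$ and an element of $R$. (i) Then there is a $\triangle^+$-switch $(G,\widetilde{G})$ such that $\widetilde{G}$ contains a triangle $T$ with $v\in T$ and $R\cap T\neq\emptyset$. (ii) Furthermore, such a $\triangle^+$-switch can be chosen with $r_1\in T$, unless for $j=2$ and $j=3$ there is a $5$-cycle in $G$ containing the path $r_1vr_j$ but no $4$-cycle in $G$ contains this path.
   Context: A $\triangle^+$-switch on a graph $G$: given five distinct vertices $b_2,b_1,x,b_3,b_4$ such that $b_2b_1,b_1x,xb_3,b_3b_4$ are edges of $G$ and $b_1b_3$, $b_2b_4$ are non-edges of $G$, the graph $\widetilde{G}$ is obtained by deleting the edges $b_1b_2,b_3b_4$ and inserting the edges $b_1b_3,b_2b_4$ (so $\widetilde{G}$ has the same degree sequence as $G$ and contains the triangle $xb_1b_3$). *)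

theory Defs
  imports Main
begin

definition graph_on :: "nat \<Rightarrow> (nat \<Rightarrow> nat \<Rightarrow> bool) \<Rightarrow> bool" where
  "graph_on n E \<longleftrightarrow> (\<forall>x y. E x y \<longrightarrow> x \<in> {1..n} \<and> y \<in> {1..n})
                     \<and> (\<forall>x y. E x y = E y x) \<and> (\<forall>x. \<not> E x x)"

definition deg :: "(nat \<Rightarrow> nat \<Rightarrow> bool) \<Rightarrow> nat \<Rightarrow> nat" where
  "deg E x = card {y. E x y}"

definition is_triangle :: "(nat \<Rightarrow> nat \<Rightarrow> bool) \<Rightarrow> nat set \<Rightarrow> bool" where
  "is_triangle E T \<longleftrightarrow> (\<exists>a b c. T = {a, b, c} \<and> distinct [a, b, c] \<and> E a b \<and> E b c \<and> E a c)"

definition switch_graph ::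
  "(nat \<Rightarrow> nat \<Rightarrow> bool) \<Rightarrow> nat \<Rightarrow> nat \<Rightarrow> nat \<Rightarrow> nat \<Rightarrow> nat \<Rightarrow> nat \<Rightarrow> bool" where
  "switch_graph E b2 b1 b3 b4 = (\<lambda>a b.
      (E a b \<and> {a, b} \<noteq> {b1, b2} \<and> {a, b} \<noteq> {b3, b4}) \<or> {a, b} = {b1, b3} \<or> {a, b} = {b2, b4})"

definition tri_switch :: "(nat \<Rightarrow> nat \<Rightarrow> bool) \<Rightarrow> (nat \<Rightarrow> nat \<Rightarrow> bool) \<Rightarrow> bool" where
  "tri_switch E E' \<longleftrightarrow> (\<exists>b2 b1 x b3 b4. distinct [b2, b1, x, b3, b4]
      \<and> E b2 b1 \<and> E b1 x \<and> E x b3 \<and> E b3 b4 \<and> \<not> E b1 b3 \<and> \<not> E b2 b4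
      \<and> E' = switch_graph E b2 b1 b3 b4)"

definition five_cycle_through :: "(nat \<Rightarrow> nat \<Rightarrow> bool) \<Rightarrow> nat \<Rightarrow> nat \<Rightarrow> nat \<Rightarrow> bool" where
  "five_cycle_through E a b c \<longleftrightarrow> (\<exists>d e. distinct [a, b, c, d, e]
      \<and> E a b \<and> E b c \<and> E c d \<and> E d e \<and> E e a)"

definition four_cycle_through :: "(nat \<Rightarrow> nat \<Rightarrow> bool) \<Rightarrow> nat \<Rightarrow> nat \<Rightarrow> nat \<Rightarrow> bool" where
  "four_cycle_through E a b c \<longleftrightarrow> (\<exists>d. distinct [a, b, c, d]
      \<and> E a b \<and> E b c \<and> E c d \<and> E d a)"

end

theory Submission
  imports Defs
begin

text \<open>A switch with \<open>x = v\<close> along a non-edge \<open>p q\<close>, where \<open>p\<close> and \<open>q\<close> are further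
  neighbours of distinct \<open>r, j \<in> R\<close>, creates the triangle \<open>v r j\<close>; a switch with \<open>x = r\<close> along
  a path \<open>v r p w\<close> whose end \<open>w\<close> is not adjacent to a third \<open>k \<in> R\<close> creates \<open>v r p\<close>. The
  hypothesis makes \<open>R\<close> independent and keeps all neighbours of \<open>R\<close> away from \<open>v\<close>, so these
  switches are valid once their five vertices are distinct. Both kinds fail at \<open>r\<close> only if
  \<open>r\<close> and \<open>j\<close> have no common neighbour besides \<open>v\<close> (which would serve as \<open>p\<close> with
  \<open>w = j\<close>), i.e. no 4-cycle through \<open>r v j\<close>, while further neighbours \<open>p\<close> of \<open>r\<close> and
  \<open>q\<close> of \<open>j\<close> are adjacent, i.e. there is a 5-cycle \<open>r v j q p\<close>.\<close>

definition switch_triangle_through :: "(nat \<Rightarrow> nat \<Rightarrow> bool) \<Rightarrow> nat set \<Rightarrow> bool" where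
  "switch_triangle_through E A \<longleftrightarrow> (\<exists>E' T. tri_switch E E' \<and> is_triangle E' T \<and> A \<subseteq> T)"

lemma switch_graph_triangle:
  assumes "\<And>a b. E a b = E b a"
    and "distinct [b2, b1, x, b3, b4]"
    and "E b1 x" "E x b3"
  shows "is_triangle (switch_graph E b2 b1 b3 b4) {x, b1, b3}"
proof -
  have "switch_graph E b2 b1 b3 b4 x b1" "switch_graph E b2 b1 b3 b4 b1 b3"
       "switch_graph E b2 b1 b3 b4 x b3"
    using assms unfolding switch_graph_def by (auto simp: doubleton_eq_iff)
  moreover have "distinct [x, b1, b3]" using assms(2) by auto
  ultimately show ?thesis unfolding is_triangle_def by blast
qed

lemma switch_triangle_throughI:
  assumes sym: "\<And>a b. E a b = E b a"
    and "distinct [b2, b1, x, b3, b4]"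
    and "E b2 b1" "E b1 x" "E x b3" "E b3 b4" "\<not> E b1 b3" "\<not> E b2 b4"
  shows "switch_triangle_through E {x, b1, b3}"
proof -
  have "tri_switch E (switch_graph E b2 b1 b3 b4)"
    unfolding tri_switch_def using assms by blast
  then show ?thesis
    unfolding switch_triangle_through_def
    using switch_graph_triangle[OF sym assms(2,4,5)] by blast
qed

lemma deg_ge_2_obtains_other_neighbour:
  assumes "deg E r \<ge> 2"
  obtains p where "E r p" "p \<noteq> u"
proof -
  have "\<not> {y. E r y} \<subseteq> {u}"
  proof
    assume "{y. E r y} \<subseteq> {u}"
    then have "card {y. E r y} \<le> 1" using card_mono[of "{u}"] by simp
    then show False using assms unfolding deg_def by simp
  qed
  then show thesis using that by blast
qed

lemma no_triangle_imp_no_common_neighbour: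
  assumes no_triangle: "\<forall>T. is_triangle E T \<longrightarrow> \<not> (v \<in> T \<and> T \<inter> R \<noteq> {})"
    and "\<And>a. \<not> E a a"
    and "r \<in> R" "E v r" "E r a"
  shows "\<not> E v a"
proof
  assume "E v a"
  moreover have "distinct [v, r, a]"
    using assms \<open>E v a\<close> by auto
  ultimately have "is_triangle E {v, r, a}"
    unfolding is_triangle_def using assms by blast
  then show False using no_triangle \<open>r \<in> R\<close> by blast
qed

locale triangle_free_star =
  fixes E :: "nat \<Rightarrow> nat \<Rightarrow> bool" and v :: nat and R :: "nat set"
  assumes sym: "E a b = E b a"
    and irrefl: "\<not> E a a"
    and centre_adj: "r \<in> R \<Longrightarrow> E v r"
    and no_common_neighbour: "r \<in> R \<Longrightarrow> E r a \<Longrightarrow> \<not> E v a"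
    and other_neighbour: "r \<in> R \<Longrightarrow> \<exists>p. E r p \<and> p \<noteq> v"
begin

lemma centre_notin: "r \<in> R \<Longrightarrow> v \<noteq> r"
  using centre_adj irrefl by blast

lemma independent: "r \<in> R \<Longrightarrow> s \<in> R \<Longrightarrow> \<not> E r s"
  using no_common_neighbour centre_adj by blast

lemma switch_at_centre:
  assumes "r \<in> R" "j \<in> R" "r \<noteq> j"
    and "E r p" "E j q" "p \<noteq> v" "q \<noteq> v" "p \<noteq> q" "\<not> E p q"
  shows "switch_triangle_through E {v, r}"
proof -
  have "p \<noteq> j" "q \<noteq> r"
    using assms independent sym by blast+
  then have "distinct [p, r, v, j, q]"
    using assms centre_notin irrefl by auto
  moreover have "E p r" "E r v" "E v j" "\<not> E r j"
    using assms centre_adj independent sym by auto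
  ultimately have "switch_triangle_through E {v, r, j}"
    using switch_triangle_throughI[of E p r v j q] assms sym by blast
  then show ?thesis unfolding switch_triangle_through_def by blast
qed

lemma switch_at_neighbour:
  assumes "r \<in> R" "k \<in> R" "r \<noteq> k"
    and "E r p" "p \<noteq> v" "E p w" "w \<noteq> r" "w \<noteq> k" "\<not> E k w"
  shows "switch_triangle_through E {v, r}"
proof -
  have "\<not> E v p" using assms no_common_neighbour by blast
  moreover have "k \<noteq> p" using assms independent by blast
  moreover have "v \<noteq> w" using assms no_common_neighbour sym by blast
  ultimately have "distinct [k, v, r, p, w]"
    using assms centre_notin irrefl by auto
  moreover have "E k v" "E v r" using assms centre_adj sym by auto
  ultimately have "switch_triangle_through E {r, v, p}"
    using switch_triangle_throughI[of E k v r p w] assms \<open>\<not> E v p\<close> sym by blast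
  then show ?thesis unfolding switch_triangle_through_def by blast
qed

lemma common_neighbour_switch:
  assumes "r \<in> R" "j \<in> R" "k \<in> R" "distinct [r, j, k]"
    and "E r d" "E j d" "d \<noteq> v"
  shows "switch_triangle_through E {v, r}"
  using switch_at_neighbour[of r k d j] assms independent sym by auto

lemma switch_triangle_through_some:
  assumes "r1 \<in> R" "r2 \<in> R" "r3 \<in> R" "distinct [r1, r2, r3]"
  shows "\<exists>r\<in>R. switch_triangle_through E {v, r}"
proof -
  obtain p1 where p1: "E r1 p1" "p1 \<noteq> v" using other_neighbour assms(1) by blast
  obtain p3 where p3: "E r3 p3" "p3 \<noteq> v" using other_neighbour assms(3) by blast
  consider "E r2 p3" | "p1 = p3" | "p1 \<noteq> p3" "\<not> E p1 p3" | "E p1 p3" "\<not> E r2 p3"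
    by blast
  then show ?thesis
  proof cases
    case 1
    then show ?thesis
      using common_neighbour_switch[of r2 r3 r1 p3] assms p3 by auto
  next
    case 2
    then show ?thesis
      using common_neighbour_switch[of r1 r3 r2 p1] assms p1 p3 by auto
  next
    case 3
    then show ?thesis
      using switch_at_centre[of r1 r3 p1 p3] assms p1 p3 by auto
  next
    case 4
    moreover have "p3 \<noteq> r1" "p3 \<noteq> r2"
      using assms p3 independent sym by blast+
    ultimately show ?thesis
      using switch_at_neighbour[of r1 r2 p1 p3] assms p1 by auto
  qed
qed

lemma no_switch_through_imp_cycles:
  assumes "r \<in> R" "j \<in> R" "k \<in> R" "distinct [r, j, k]"
    and "\<not> switch_triangle_through E {v, r}"
  shows "five_cycle_through E r v j \<and> \<not> four_cycle_through E r v j"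
proof
  show "\<not> four_cycle_through E r v j"
  proof
    assume "four_cycle_through E r v j"
    then obtain d where "distinct [r, v, j, d]" "E j d" "E d r"
      unfolding four_cycle_through_def by blast
    then show False
      using common_neighbour_switch[of r j k d] assms sym by auto
  qed
  obtain p where p: "E r p" "p \<noteq> v" using other_neighbour assms(1) by blast
  obtain q where q: "E j q" "q \<noteq> v" using other_neighbour assms(2) by blast
  have "p \<noteq> q"
    using common_neighbour_switch[of r j k p] assms p q by auto
  moreover have "E p q"
    using switch_at_centre[of r j p q] assms p q \<open>p \<noteq> q\<close> by auto
  moreover have "p \<noteq> r" "q \<noteq> j" "p \<noteq> j" "q \<noteq> r"
    using assms p q irrefl independent sym by blast+
  ultimately have "distinct [r, v, j, q, p]"
    using assms p q centre_notin by auto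
  then show "five_cycle_through E r v j"
    unfolding five_cycle_through_def using assms p q \<open>E p q\<close> centre_adj sym by blast
qed

end

theorem lemma2:
  fixes n :: nat and E :: "nat \<Rightarrow> nat \<Rightarrow> bool" and v r1 r2 r3 :: nat
  assumes "graph_on n E"
    and "v \<in> {1..n}"
    and "distinct [r1, r2, r3]"
    and "E v r1" "E v r2" "E v r3"
    and "deg E r1 \<ge> 2" "deg E r2 \<ge> 2" "deg E r3 \<ge> 2"
    and "\<forall>T. is_triangle E T \<longrightarrow> \<not> (v \<in> T \<and> T \<inter> {r1, r2, r3} \<noteq> {})"
  shows "(\<exists>E' T. tri_switch E E' \<and> is_triangle E' T \<and> v \<in> T \<and> T \<inter> {r1, r2, r3} \<noteq> {})
       \<and> (\<not> (\<forall>j\<in>{r2, r3}. five_cycle_through E r1 v j \<and> \<not> four_cycle_through E r1 v j)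
           \<longrightarrow> (\<exists>E' T. tri_switch E E' \<and> is_triangle E' T \<and> v \<in> T \<and> r1 \<in> T))"
proof -
  have sym: "\<And>a b. E a b = E b a" and irrefl: "\<And>a. \<not> E a a"
    using assms(1) unfolding graph_on_def by blast+
  have no_common: "\<not> E v a" if "r \<in> {r1, r2, r3}" "E r a" for r a
    using no_triangle_imp_no_common_neighbour[OF assms(10) irrefl] that assms(4-6) by blast
  have other: "\<exists>p. E r p \<and> p \<noteq> v" if "r \<in> {r1, r2, r3}" for r
    using that assms(7-9) deg_ge_2_obtains_other_neighbour[of E r v] by blast
  interpret triangle_free_star E v "{r1, r2, r3}"
  proof
    show "\<And>r. r \<in> {r1, r2, r3} \<Longrightarrow> E v r" using assms(4-6) by blast
  qed (use sym irrefl no_common other in blast)+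
  show ?thesis
  proof (intro conjI impI)
    show "\<exists>E' T. tri_switch E E' \<and> is_triangle E' T \<and> v \<in> T \<and> T \<inter> {r1, r2, r3} \<noteq> {}"
      using switch_triangle_through_some[of r1 r2 r3] assms(3)
      unfolding switch_triangle_through_def by auto
    assume "\<not> (\<forall>j\<in>{r2, r3}. five_cycle_through E r1 v j \<and> \<not> four_cycle_through E r1 v j)"
    then have "switch_triangle_through E {v, r1}"
      using no_switch_through_imp_cycles[of r1 r2 r3] no_switch_through_imp_cycles[of r1 r3 r2]
        assms(3) by auto
    then show "\<exists>E' T. tri_switch E E' \<and> is_triangle E' T \<and> v \<in> T \<and> r1 \<in> T"
      unfolding switch_triangle_through_def by blast
  qed
qed

end
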